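(* Let $F$ be a finite field of characteristic $3$. Let $k\ge 0$ be an integer, $m=3k+1$, and $t$ an integer with $t^3\equiv 1\pmod m$ and $\gcd(m,t-1)=1$. Let $G=T_{3m}=\langle x,y\mid x^m=y^3=1,\ y^{-1}xy=x^t\rangle$ (of order $3m$), $FG$ its group algebra, and $H=\langle x\rangle$. Then $\Delta(G,H)$ is a semisimple ring.
   Context: $\Delta(G,H)$ is the ideal of $FG$ generated by $\{h-1\mid h\in H\}$, regarded as a ring with the multiplication of $FG$. *)

theory Defs
  imports "HOL-Algebra.Algebra"
begin

text \<open>Group algebra FG of a finite group G (HOL-Algebra) over a field 'f:
  elements are functions carrier G \<rightarrow> 'f (extended by 0 outside the carrier),
  with pointwise addition and convolution product.\<close>

definition group_alg :: "('g, 'b) monoid_scheme \<Rightarrow> ('g \<Rightarrow> 'f::field) set" where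
  "group_alg G = {a. \<forall>g. g \<notin> carrier G \<longrightarrow> a g = 0}"

definition ga_add :: "('g \<Rightarrow> 'f::field) \<Rightarrow> ('g \<Rightarrow> 'f) \<Rightarrow> ('g \<Rightarrow> 'f)" where
  "ga_add a b = (\<lambda>g. a g + b g)"

definition ga_neg :: "('g \<Rightarrow> 'f::field) \<Rightarrow> ('g \<Rightarrow> 'f)" where
  "ga_neg a = (\<lambda>g. - a g)"

definition ga_zero :: "'g \<Rightarrow> 'f::field" where
  "ga_zero = (\<lambda>g. 0)"

definition ga_mult :: "('g, 'b) monoid_scheme \<Rightarrow> ('g \<Rightarrow> 'f::field) \<Rightarrow> ('g \<Rightarrow> 'f) \<Rightarrow> ('g \<Rightarrow> 'f)" where
  "ga_mult G a b = (\<lambda>g. if g \<in> carrier G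
      then (\<Sum>h\<in>carrier G. a h * b (inv\<^bsub>G\<^esub> h \<otimes>\<^bsub>G\<^esub> g)) else 0)"

definition ga_basis :: "('g, 'b) monoid_scheme \<Rightarrow> 'g \<Rightarrow> ('g \<Rightarrow> 'f::field)" where
  "ga_basis G g = (\<lambda>h. if h = g then 1 else 0)"

definition ga_ideal :: "('g, 'b) monoid_scheme \<Rightarrow> ('g \<Rightarrow> 'f::field) set \<Rightarrow> bool" where
  "ga_ideal G I \<longleftrightarrow> I \<subseteq> group_alg G \<and> ga_zero \<in> I
     \<and> (\<forall>a\<in>I. \<forall>b\<in>I. ga_add a b \<in> I) \<and> (\<forall>a\<in>I. ga_neg a \<in> I)
     \<and> (\<forall>r\<in>group_alg G. \<forall>a\<in>I. ga_mult G r a \<in> I \<and> ga_mult G a r \<in> I)"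

definition ga_ideal_gen :: "('g, 'b) monoid_scheme \<Rightarrow> ('g \<Rightarrow> 'f::field) set \<Rightarrow> ('g \<Rightarrow> 'f) set" where
  "ga_ideal_gen G S = \<Inter>{I. ga_ideal G I \<and> S \<subseteq> I}"

definition Delta :: "('g, 'b) monoid_scheme \<Rightarrow> 'g set \<Rightarrow> ('g \<Rightarrow> 'f::field) set" where
  "Delta G H = ga_ideal_gen G
     {ga_add (ga_basis G h) (ga_neg (ga_basis G \<one>\<^bsub>G\<^esub>)) | h. h \<in> H}"

text \<open>Jacobson radical of a (possibly non-unital) ring given by a carrier R closed
  under the FG operations, with the multiplication of FG:
  J(R) = {a \<in> R. \<forall>r \<in> R. r a is left quasi-regular},
  where z is left quasi-regular iff \<exists>w \<in> R. w + z - w z = 0.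
  A ring is semisimple (in the sense of Jacobson) iff J(R) = 0.\<close>
definition ga_jacobson_rad :: "('g, 'b) monoid_scheme \<Rightarrow> ('g \<Rightarrow> 'f::field) set \<Rightarrow> ('g \<Rightarrow> 'f) set" where
  "ga_jacobson_rad G R = {a\<in>R. \<forall>r\<in>R. \<exists>w\<in>R.
      ga_add (ga_add w (ga_mult G r a)) (ga_neg (ga_mult G w (ga_mult G r a))) = ga_zero}"

definition ga_semisimple_ring :: "('g, 'b) monoid_scheme \<Rightarrow> ('g \<Rightarrow> 'f::field) set \<Rightarrow> bool" where
  "ga_semisimple_ring G R \<longleftrightarrow> ga_jacobson_rad G R = {ga_zero}"

end

theory Submission
  imports Defs
begin

text \<open>For \<open>u \<in> FG\<close> let \<open>\<psi>(u)\<close> be the sum of the coefficients \<open>u(k)\<close>, \<open>k \<in> H - {1}\<close>.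
  In characteristic 3 we have \<open>\<psi>(u\<^sup>3) = \<psi>(u)\<^sup>3\<close>: \<open>\<psi>(u\<^sup>3)\<close> is a sum over the triples
  \<open>(a, b, c)\<close> with \<open>abc \<in> H - {1}\<close>, a condition invariant under cyclic rotation because \<open>H\<close> is
  normal, so every orbit of length 3 contributes 0; and a constant triple \<open>(g, g, g)\<close> qualifies
  exactly when \<open>g \<in> H - {1}\<close>, because elements outside \<open>H\<close> have cube 1 while \<open>3\<close> does not
  divide \<open>|H|\<close>.

  If \<open>a\<close> lies in the Jacobson radical of \<open>\<Delta>(G,H)\<close> and \<open>r \<in> \<Delta>(G,H)\<close>, then \<open>ra\<close> is
  nilpotent because \<open>FG\<close> is finite, hence \<open>\<psi>(ra) = 0\<close>. Since \<open>\<Delta>(G,H)\<close> lies in the kernel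
  of \<open>FG \<rightarrow> F[H\<setminus>G]\<close>, also \<open>(ra)(1) = -\<psi>(ra) = 0\<close>. Taking \<open>r = g\<^sup>-\<^sup>1(h - 1)\<close> shows that
  \<open>a\<close> is constant on each coset \<open>Hg\<close>, and then the vanishing coset sums give \<open>|H| a = 0\<close>.

  For \<open>T\<^sub>3\<^sub>m\<close> and \<open>H = \<langle>x\<rangle>\<close>: \<open>|H|\<close> divides \<open>m = 3k + 1\<close>, and since \<open>m\<close> divides
  \<open>t\<^sup>2 + t + 1\<close>, each \<open>y\<^sup>r x\<^sup>i\<close> with \<open>r \<in> {1, 2}\<close> has cube \<open>y^(3r) x^((t^(2r) + t^r + 1) i) = 1\<close>.\<close>

lemma ga_mult_closed: "ga_mult G a b \<in> group_alg G"
  by (simp add: group_alg_def ga_mult_def)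

lemma ga_add_closed: "a \<in> group_alg G \<Longrightarrow> b \<in> group_alg G \<Longrightarrow> ga_add a b \<in> group_alg G"
  by (simp add: group_alg_def ga_add_def)

lemma ga_neg_closed: "a \<in> group_alg G \<Longrightarrow> ga_neg a \<in> group_alg G"
  by (simp add: group_alg_def ga_neg_def)

lemma ga_zero_closed: "ga_zero \<in> group_alg G"
  by (simp add: group_alg_def ga_zero_def)

lemma ga_basis_closed: "g \<in> carrier G \<Longrightarrow> ga_basis G g \<in> group_alg G"
  by (auto simp: group_alg_def ga_basis_def)

lemma ga_mult_add_left: "ga_mult G (ga_add a b) c = ga_add (ga_mult G a c) (ga_mult G b c)"
  by (rule ext) (simp add: ga_mult_def ga_add_def distrib_right sum.distrib)

lemma ga_mult_neg_left: "ga_mult G (ga_neg a) c = ga_neg (ga_mult G a c)"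
  by (rule ext) (simp add: ga_mult_def ga_neg_def sum_negf)

lemma ga_mult_zero_left: "ga_mult G ga_zero c = ga_zero"
  by (rule ext) (simp add: ga_mult_def ga_zero_def)

lemma ga_mult_zero_right: "ga_mult G c ga_zero = ga_zero"
  by (rule ext) (simp add: ga_mult_def ga_zero_def)

lemma ga_ideal_group_alg: "ga_ideal G (group_alg G)"
  by (simp add: ga_ideal_def ga_add_closed ga_neg_closed ga_zero_closed ga_mult_closed)

lemma ga_ideal_ideal_gen:
  assumes "S \<subseteq> group_alg G"
  shows "ga_ideal G (ga_ideal_gen G S)"
proof -
  have "group_alg G \<in> {I. ga_ideal G I \<and> S \<subseteq> I}"
    using assms ga_ideal_group_alg by simp
  then show ?thesis
    unfolding ga_ideal_gen_def ga_ideal_def by (auto simp: ga_ideal_def)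
qed

lemma ga_ideal_gen_subset: "S \<subseteq> ga_ideal_gen G S"
  by (auto simp: ga_ideal_gen_def)

lemma ga_ideal_gen_least: "ga_ideal G I \<Longrightarrow> S \<subseteq> I \<Longrightarrow> ga_ideal_gen G S \<subseteq> I"
  by (auto simp: ga_ideal_gen_def)

lemma ga_zero_mem_jacobson_rad:
  fixes R :: "('g \<Rightarrow> 'f::field) set"
  assumes "ga_zero \<in> R"
  shows "ga_zero \<in> ga_jacobson_rad G R"
proof -
  have "ga_add (ga_add ga_zero (ga_mult G r ga_zero)) (ga_neg (ga_mult G ga_zero (ga_mult G r ga_zero)))
      = ga_zero" for r :: "'g \<Rightarrow> 'f"
    by (simp add: ga_mult_zero_left ga_mult_zero_right) (simp add: ga_add_def ga_neg_def ga_zero_def)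
  then show ?thesis
    using assms unfolding ga_jacobson_rad_def by blast
qed

lemma finite_group_alg:
  assumes "finite (carrier G)" and "finite (UNIV :: 'f set)"
  shows "finite (group_alg G :: ('g \<Rightarrow> 'f::field) set)"
proof -
  have "group_alg G = {a :: 'g \<Rightarrow> 'f. \<forall>g. (g \<in> carrier G \<longrightarrow> a g \<in> UNIV) \<and> (g \<notin> carrier G \<longrightarrow> a g = 0)}"
    by (auto simp: group_alg_def)
  then show ?thesis using finite_set_of_finite_funs[OF assms] by simp
qed

definition ga_monoid :: "('g, 'b) monoid_scheme \<Rightarrow> ('g \<Rightarrow> 'f::field) monoid" where
  "ga_monoid G = \<lparr>carrier = group_alg G, monoid.mult = ga_mult G, one = ga_basis G \<one>\<^bsub>G\<^esub>\<rparr>"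

lemma ga_monoid_simps [simp]:
  "carrier (ga_monoid G) = group_alg G"
  "monoid.mult (ga_monoid G) = ga_mult G"
  "one (ga_monoid G) = ga_basis G \<one>\<^bsub>G\<^esub>"
  by (simp_all add: ga_monoid_def)

lemma (in group) sum_carrier_lmult_reindex:
  assumes "c \<in> carrier G"
  shows "(\<Sum>h\<in>carrier G. f h) = (\<Sum>l\<in>carrier G. f (c \<otimes> l))"
proof -
  have "(\<Sum>h\<in>carrier G. f h) = (\<Sum>h\<in>(\<lambda>l. c \<otimes> l) ` carrier G. f h)"
    using surj_const_mult[OF assms] by simp
  also have "\<dots> = (\<Sum>l\<in>carrier G. f (c \<otimes> l))"
    by (simp add: sum.reindex[OF inj_on_cmult[OF assms]])
  finally show ?thesis .
qed

locale finite_group = group G for G (structure) +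
  assumes finite_carrier: "finite (carrier G)"

context finite_group
begin

lemma ga_mult_assoc:
  assumes "a \<in> group_alg G" "b \<in> group_alg G" "c \<in> group_alg G"
  shows "ga_mult G (ga_mult G a b) c = ga_mult G a (ga_mult G b c)"
proof (rule ext)
  fix g
  show "ga_mult G (ga_mult G a b) c g = ga_mult G a (ga_mult G b c) g"
  proof (cases "g \<in> carrier G")
    case False
    then show ?thesis by (simp add: ga_mult_def)
  next
    case g: True
    have "ga_mult G (ga_mult G a b) c g
       = (\<Sum>h\<in>carrier G. \<Sum>k\<in>carrier G. a k * b (inv k \<otimes> h) * c (inv h \<otimes> g))"
      using g by (simp add: ga_mult_def sum_distrib_right)
    also have "\<dots> = (\<Sum>k\<in>carrier G. \<Sum>h\<in>carrier G. a k * b (inv k \<otimes> h) * c (inv h \<otimes> g))"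
      by (rule sum.swap)
    also have "\<dots> = (\<Sum>k\<in>carrier G. a k * (\<Sum>l\<in>carrier G. b l * c (inv l \<otimes> (inv k \<otimes> g))))"
    proof (rule sum.cong[OF refl])
      fix k assume k: "k \<in> carrier G"
      have "(\<Sum>h\<in>carrier G. a k * b (inv k \<otimes> h) * c (inv h \<otimes> g))
          = (\<Sum>l\<in>carrier G. a k * (b l * c (inv l \<otimes> (inv k \<otimes> g))))"
        by (subst sum_carrier_lmult_reindex[OF k], rule sum.cong[OF refl])
          (simp add: k g inv_mult_group m_assoc flip: m_assoc[of "inv k" k])
      then show "(\<Sum>h\<in>carrier G. a k * b (inv k \<otimes> h) * c (inv h \<otimes> g))
          = a k * (\<Sum>l\<in>carrier G. b l * c (inv l \<otimes> (inv k \<otimes> g)))"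
        by (simp add: sum_distrib_left)
    qed
    also have "\<dots> = ga_mult G a (ga_mult G b c) g"
      using g by (simp add: ga_mult_def)
    finally show ?thesis .
  qed
qed

lemma ga_basis_mult_apply:
  assumes "c \<in> carrier G" and "g \<in> carrier G"
  shows "ga_mult G (ga_basis G c) a g = a (inv c \<otimes> g)"
proof -
  have "ga_mult G (ga_basis G c) a g = (\<Sum>h\<in>carrier G. if h = c then a (inv h \<otimes> g) else 0)"
    using assms unfolding ga_mult_def ga_basis_def by (auto intro: sum.cong)
  also have "\<dots> = a (inv c \<otimes> g)"
    using assms finite_carrier by simp
  finally show ?thesis .
qed

lemma ga_mult_basis_apply:
  assumes "c \<in> carrier G" and "g \<in> carrier G"
  shows "ga_mult G a (ga_basis G c) g = a (g \<otimes> inv c)"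
proof -
  have "inv h \<otimes> g = c \<longleftrightarrow> h = g \<otimes> inv c" if "h \<in> carrier G" for h
    using assms that by (metis inv_solve_left inv_solve_right)
  then have "ga_mult G a (ga_basis G c) g = (\<Sum>h\<in>carrier G. if h = g \<otimes> inv c then a h else 0)"
    using assms unfolding ga_mult_def ga_basis_def by (auto intro!: sum.cong)
  also have "\<dots> = a (g \<otimes> inv c)"
    using assms finite_carrier by simp
  finally show ?thesis .
qed

lemma ga_mult_one_left:
  assumes "a \<in> group_alg G"
  shows "ga_mult G (ga_basis G \<one>) a = a"
proof
  fix g
  show "ga_mult G (ga_basis G \<one>) a g = a g"
    using assms by (cases "g \<in> carrier G") (simp add: ga_basis_mult_apply, simp add: group_alg_def ga_mult_def)
qed

lemma ga_mult_one_right: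
  assumes "a \<in> group_alg G"
  shows "ga_mult G a (ga_basis G \<one>) = a"
proof
  fix g
  show "ga_mult G a (ga_basis G \<one>) g = a g"
    using assms by (cases "g \<in> carrier G") (simp add: ga_mult_basis_apply, simp add: group_alg_def ga_mult_def)
qed

lemma monoid_ga_monoid: "monoid (ga_monoid G :: ('a \<Rightarrow> 'f::field) monoid)"
  by (rule monoidI)
    (auto simp: ga_mult_closed ga_basis_closed ga_mult_one_left ga_mult_one_right ga_mult_assoc)

lemma ga_monoid_pow3:
  assumes "v \<in> group_alg G"
  shows "v [^]\<^bsub>(ga_monoid G :: ('a \<Rightarrow> 'f::field) monoid)\<^esub> (3::nat) = ga_mult G (ga_mult G v v) v"
  using assms by (simp add: numeral_3_eq_3 ga_mult_one_left)

lemma ga_mult_cube_apply: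
  assumes "k \<in> carrier G"
  shows "ga_mult G (ga_mult G u u) u k
     = (\<Sum>g1\<in>carrier G. \<Sum>g2\<in>carrier G. u g1 * u g2 * u (inv (g1 \<otimes> g2) \<otimes> k))"
proof -
  have "ga_mult G (ga_mult G u u) u k
     = (\<Sum>w\<in>carrier G. \<Sum>g1\<in>carrier G. u g1 * u (inv g1 \<otimes> w) * u (inv w \<otimes> k))"
    using assms by (simp add: ga_mult_def sum_distrib_right)
  also have "\<dots> = (\<Sum>g1\<in>carrier G. \<Sum>w\<in>carrier G. u g1 * u (inv g1 \<otimes> w) * u (inv w \<otimes> k))"
    by (rule sum.swap)
  also have "\<dots> = (\<Sum>g1\<in>carrier G. \<Sum>g2\<in>carrier G. u g1 * u g2 * u (inv (g1 \<otimes> g2) \<otimes> k))"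
  proof (rule sum.cong[OF refl])
    fix g1 assume g1: "g1 \<in> carrier G"
    show "(\<Sum>w\<in>carrier G. u g1 * u (inv g1 \<otimes> w) * u (inv w \<otimes> k))
        = (\<Sum>g2\<in>carrier G. u g1 * u g2 * u (inv (g1 \<otimes> g2) \<otimes> k))"
      by (subst sum_carrier_lmult_reindex[OF g1]) (simp add: g1 flip: m_assoc)
  qed
  finally show ?thesis .
qed

lemma sum_ga_cube_eq_sum_triples:
  assumes D: "D \<subseteq> carrier G"
  shows "(\<Sum>k\<in>D. ga_mult G (ga_mult G u u) u k)
    = (\<Sum>g1\<in>carrier G. \<Sum>g2\<in>carrier G. \<Sum>g3\<in>carrier G.
         if g1 \<otimes> g2 \<otimes> g3 \<in> D then u g1 * u g2 * u g3 else 0)"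
proof -
  have inner: "(\<Sum>g3\<in>carrier G. if g1 \<otimes> g2 \<otimes> g3 \<in> D then u g1 * u g2 * u g3 else 0)
      = (\<Sum>k\<in>D. u g1 * u g2 * u (inv (g1 \<otimes> g2) \<otimes> k))"
    if "g1 \<in> carrier G" and "g2 \<in> carrier G" for g1 g2
  proof -
    have g12: "g1 \<otimes> g2 \<in> carrier G"
      using that by simp
    have cancel: "inv (g1 \<otimes> g2) \<otimes> (g1 \<otimes> g2 \<otimes> l) = l" if "l \<in> carrier G" for l
      using g12 that by (metis inv_closed l_inv l_one m_assoc)
    have "(\<Sum>k\<in>D. u g1 * u g2 * u (inv (g1 \<otimes> g2) \<otimes> k))
        = (\<Sum>k\<in>carrier G. if k \<in> D then u g1 * u g2 * u (inv (g1 \<otimes> g2) \<otimes> k) else 0)"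
      using D finite_carrier by (simp add: sum.inter_restrict[symmetric] Int_absorb1)
    also have "\<dots> = (\<Sum>g3\<in>carrier G. if g1 \<otimes> g2 \<otimes> g3 \<in> D then u g1 * u g2 * u g3 else 0)"
      by (subst sum_carrier_lmult_reindex[OF g12]) (intro sum.cong refl, simp add: cancel)
    finally show ?thesis ..
  qed
  have "(\<Sum>g1\<in>carrier G. \<Sum>g2\<in>carrier G. \<Sum>g3\<in>carrier G.
         if g1 \<otimes> g2 \<otimes> g3 \<in> D then u g1 * u g2 * u g3 else 0)
      = (\<Sum>g1\<in>carrier G. \<Sum>g2\<in>carrier G. \<Sum>k\<in>D. u g1 * u g2 * u (inv (g1 \<otimes> g2) \<otimes> k))"
    by (simp add: inner)
  also have "\<dots> = (\<Sum>k\<in>D. \<Sum>g1\<in>carrier G. \<Sum>g2\<in>carrier G. u g1 * u g2 * u (inv (g1 \<otimes> g2) \<otimes> k))"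
    by (simp add: sum.swap[of _ D])
  also have "\<dots> = (\<Sum>k\<in>D. ga_mult G (ga_mult G u u) u k)"
    using D by (intro sum.cong) (auto simp: ga_mult_cube_apply)
  finally show ?thesis ..
qed

end

lemma (in monoid) finite_pow_eq_pow:
  assumes "finite (carrier G)" and "z \<in> carrier G"
  obtains a b :: nat where "1 \<le> a" and "a < b" and "z [^] a = z [^] b"
proof -
  let ?S = "{1..Suc (card (carrier G))}"
  have "\<not> inj_on (\<lambda>k. z [^] k) ?S"
    using card_inj_on_le[of "\<lambda>k. z [^] k" ?S "carrier G"] assms by auto
  then show ?thesis
    using that unfolding inj_on_def by (metis atLeastAtMost_iff linorder_neqE_nat)
qed

lemma (in monoid) finite_idempotent_power:
  assumes "finite (carrier G)" and z: "z \<in> carrier G"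
  shows "\<exists>n::nat. n \<ge> 1 \<and> z [^] n \<otimes> z [^] n = z [^] n"
proof -
  obtain a b :: nat where a: "1 \<le> a" and ab: "a < b" and zab: "z [^] a = z [^] b"
    using finite_pow_eq_pow[OF assms] .
  define p where "p = b - a"
  have periodic: "z [^] (a + q * p) = z [^] a" for q
  proof (induction q)
    case (Suc q)
    have "a + Suc q * p = q * p + b"
      using ab by (simp add: p_def)
    then have "z [^] (a + Suc q * p) = z [^] (q * p) \<otimes> z [^] b"
      using z by (simp only: nat_pow_mult)
    also have "\<dots> = z [^] (q * p) \<otimes> z [^] a"
      by (simp only: zab)
    also have "\<dots> = z [^] (a + q * p)"
      using z by (simp add: nat_pow_mult add.commute)
    finally show ?case using Suc by simp
  qed simp
  have p: "p \<ge> 1"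
    using ab by (simp add: p_def)
  then have a_le: "a \<le> a * p"
    by simp
  have "z [^] (a * p) \<otimes> z [^] (a * p) = z [^] ((a * p - a) + (a + a * p))"
    using z a_le by (simp add: nat_pow_mult)
  also have "\<dots> = z [^] (a * p - a) \<otimes> z [^] (a + a * p)"
    by (rule nat_pow_mult[symmetric, OF z])
  also have "\<dots> = z [^] (a * p - a) \<otimes> z [^] a"
    by (simp only: periodic)
  also have "\<dots> = z [^] (a * p)"
    using z a_le by (simp add: nat_pow_mult)
  finally have "z [^] (a * p) \<otimes> z [^] (a * p) = z [^] (a * p)" .
  moreover have "a * p \<ge> 1"
    using a p by simp
  ultimately show ?thesis by blast
qed

text \<open>The kernel of the linear map \<open>FG \<rightarrow> F[H\<setminus>G]\<close> sending \<open>g\<close> to the coset \<open>Hg\<close>.\<close>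

definition ga_coset_kernel :: "('g, 'b) monoid_scheme \<Rightarrow> 'g set \<Rightarrow> ('g \<Rightarrow> 'f::field) set" where
  "ga_coset_kernel G H = {u \<in> group_alg G. \<forall>g\<in>carrier G. (\<Sum>h\<in>H. u (h \<otimes>\<^bsub>G\<^esub> g)) = 0}"

context finite_group
begin

lemma ga_quasi_regular_idempotent_eq_zero:
  assumes w: "w \<in> group_alg G" and e: "e \<in> group_alg G" and idem: "ga_mult G e e = e"
    and quasi_regular: "ga_add (ga_add w e) (ga_neg (ga_mult G w e)) = (ga_zero :: 'a \<Rightarrow> 'f::field)"
  shows "e = ga_zero"
proof -
  have "ga_zero = ga_mult G (ga_add (ga_add w e) (ga_neg (ga_mult G w e))) e"
    by (simp only: quasi_regular ga_mult_zero_left)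
  also have "\<dots> = ga_add (ga_add (ga_mult G w e) (ga_mult G e e)) (ga_neg (ga_mult G (ga_mult G w e) e))"
    by (simp only: ga_mult_add_left ga_mult_neg_left)
  also have "\<dots> = ga_add (ga_add (ga_mult G w e) e) (ga_neg (ga_mult G w e))"
    by (simp only: ga_mult_assoc[OF w e e] idem)
  also have "\<dots> = e"
    by (simp add: ga_add_def ga_neg_def)
  finally show ?thesis ..
qed

lemma jacobson_rad_idempotent_eq_zero:
  fixes R :: "('a \<Rightarrow> 'f::field) set"
  assumes R: "R \<subseteq> group_alg G" and a: "a \<in> ga_jacobson_rad G R" and s: "s \<in> R"
    and idem: "ga_mult G (ga_mult G s a) (ga_mult G s a) = ga_mult G s a"
  shows "ga_mult G s a = ga_zero"
proof -
  obtain w where w: "w \<in> R"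
    and quasi_regular: "ga_add (ga_add w (ga_mult G s a)) (ga_neg (ga_mult G w (ga_mult G s a))) = ga_zero"
    using a s unfolding ga_jacobson_rad_def by blast
  show ?thesis
  proof (rule ga_quasi_regular_idempotent_eq_zero)
    show "w \<in> group_alg G"
      using w R by blast
  qed (use idem quasi_regular in \<open>simp_all add: ga_mult_closed\<close>)
qed

lemma jacobson_rad_mult_nilpotent:
  fixes R :: "('a \<Rightarrow> 'f::field) set"
  assumes finite_field: "finite (UNIV :: 'f set)" and R: "ga_ideal G R"
    and a: "a \<in> ga_jacobson_rad G R" and r: "r \<in> R"
  shows "\<exists>n::nat. ga_mult G r a [^]\<^bsub>ga_monoid G\<^esub> n = ga_zero"
proof -
  interpret M: monoid "ga_monoid G :: ('a \<Rightarrow> 'f) monoid"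
    by (rule monoid_ga_monoid)
  have R_alg: "R \<subseteq> group_alg G"
    and R_mult: "\<And>s b. s \<in> group_alg G \<Longrightarrow> b \<in> R \<Longrightarrow> ga_mult G s b \<in> R"
    using R by (auto simp: ga_ideal_def)
  have rG: "r \<in> group_alg G" and aG: "a \<in> group_alg G"
    using a r R_alg by (auto simp: ga_jacobson_rad_def)
  define z where "z = ga_mult G r a"
  have z: "z \<in> group_alg G"
    by (simp add: z_def ga_mult_closed)
  have "finite (carrier (ga_monoid G :: ('a \<Rightarrow> 'f) monoid))"
    using finite_group_alg[OF finite_carrier finite_field] by simp
  moreover have "z \<in> carrier (ga_monoid G)"
    using z by simp
  ultimately obtain n :: nat where n: "n \<ge> 1"
    and idem: "z [^]\<^bsub>ga_monoid G\<^esub> n \<otimes>\<^bsub>ga_monoid G\<^esub> z [^]\<^bsub>ga_monoid G\<^esub> n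
      = z [^]\<^bsub>ga_monoid G\<^esub> n"
    using M.finite_idempotent_power by blast
  define p where "p = z [^]\<^bsub>ga_monoid G\<^esub> (n - 1)"
  have p: "p \<in> group_alg G"
    unfolding p_def using M.nat_pow_closed z by simp
  have "z [^]\<^bsub>ga_monoid G\<^esub> n = z [^]\<^bsub>ga_monoid G\<^esub> Suc (n - 1)"
    using n by simp
  also have "\<dots> = ga_mult G p z"
    by (simp add: p_def)
  also have "\<dots> = ga_mult G (ga_mult G p r) a"
    using ga_mult_assoc[OF p rG aG] by (simp only: z_def)
  finally have zn: "z [^]\<^bsub>ga_monoid G\<^esub> n = ga_mult G (ga_mult G p r) a" .
  have "ga_mult G p r \<in> R"
    using R_mult p r by simp
  then have "z [^]\<^bsub>ga_monoid G\<^esub> n = ga_zero"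
    using jacobson_rad_idempotent_eq_zero[OF R_alg a] idem zn by simp
  then show ?thesis
    unfolding z_def[symmetric] by blast
qed

lemma sum_normal_conj:
  assumes H: "H \<lhd> G" and k: "k \<in> carrier G" and g: "g \<in> carrier G"
  shows "(\<Sum>h\<in>H. u (inv k \<otimes> (h \<otimes> g))) = (\<Sum>h\<in>H. u (h \<otimes> (inv k \<otimes> g)))"
proof (rule sum.reindex_bij_witness[where i = "\<lambda>h. k \<otimes> h \<otimes> inv k" and j = "\<lambda>h. inv k \<otimes> h \<otimes> k"])
  fix h assume h: "h \<in> H"
  then have hG: "h \<in> carrier G"
    using normal_imp_subgroup[OF H] subgroup.subset by blast
  show "k \<otimes> (inv k \<otimes> h \<otimes> k) \<otimes> inv k = h"
    using hG k by (simp add: m_assoc flip: m_assoc[of k "inv k"])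
  show "inv k \<otimes> h \<otimes> k \<in> H"
    using normal.inv_op_closed1[OF H k h] .
  show "inv k \<otimes> (k \<otimes> h \<otimes> inv k) \<otimes> k = h"
    using hG k by (simp add: m_assoc flip: m_assoc[of "inv k" k])
  show "k \<otimes> h \<otimes> inv k \<in> H"
    using normal.inv_op_closed2[OF H k h] .
  show "u (inv k \<otimes> h \<otimes> k \<otimes> (inv k \<otimes> g)) = u (inv k \<otimes> (h \<otimes> g))"
    using hG k g by (simp add: m_assoc flip: m_assoc[of k "inv k"])
qed

lemma ga_mult_left_mem_coset_kernel:
  assumes H: "H \<lhd> G" and a: "a \<in> ga_coset_kernel G H"
  shows "ga_mult G r a \<in> ga_coset_kernel G H"
  unfolding ga_coset_kernel_def
proof (intro CollectI conjI ballI ga_mult_closed)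
  fix g assume g: "g \<in> carrier G"
  have HG: "H \<subseteq> carrier G"
    using normal_imp_subgroup[OF H] subgroup.subset by blast
  have "(\<Sum>h\<in>H. ga_mult G r a (h \<otimes> g)) = (\<Sum>h\<in>H. \<Sum>k\<in>carrier G. r k * a (inv k \<otimes> (h \<otimes> g)))"
    using g HG by (intro sum.cong) (auto simp: ga_mult_def)
  also have "\<dots> = (\<Sum>k\<in>carrier G. r k * (\<Sum>h\<in>H. a (inv k \<otimes> (h \<otimes> g))))"
    by (simp add: sum.swap[of _ H] sum_distrib_left)
  also have "\<dots> = (\<Sum>k\<in>carrier G. r k * (\<Sum>h\<in>H. a (h \<otimes> (inv k \<otimes> g))))"
    using g by (intro sum.cong refl) (simp add: sum_normal_conj[OF H])
  also have "\<dots> = 0"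
    using a g by (intro sum.neutral ballI) (simp add: ga_coset_kernel_def)
  finally show "(\<Sum>h\<in>H. ga_mult G r a (h \<otimes> g)) = 0" .
qed

lemma ga_mult_right_mem_coset_kernel:
  assumes H: "subgroup H G" and a: "a \<in> ga_coset_kernel G H"
  shows "ga_mult G a r \<in> ga_coset_kernel G H"
  unfolding ga_coset_kernel_def
proof (intro CollectI conjI ballI ga_mult_closed)
  fix g assume g: "g \<in> carrier G"
  have HG: "H \<subseteq> carrier G"
    using H subgroup.subset by blast
  have "(\<Sum>h\<in>H. ga_mult G a r (h \<otimes> g)) = (\<Sum>h\<in>H. \<Sum>k\<in>carrier G. a k * r (inv k \<otimes> (h \<otimes> g)))"
    using g HG by (intro sum.cong) (auto simp: ga_mult_def)
  also have "\<dots> = (\<Sum>h\<in>H. \<Sum>k\<in>carrier G. a (h \<otimes> k) * r (inv k \<otimes> g))"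
  proof (rule sum.cong[OF refl])
    fix h assume "h \<in> H"
    then have h: "h \<in> carrier G"
      using HG by blast
    have "inv (h \<otimes> k) \<otimes> (h \<otimes> g) = inv k \<otimes> g" if "k \<in> carrier G" for k
      using h g that by (simp add: inv_mult_group m_assoc flip: m_assoc[of "inv h" h])
    then show "(\<Sum>k\<in>carrier G. a k * r (inv k \<otimes> (h \<otimes> g))) = (\<Sum>k\<in>carrier G. a (h \<otimes> k) * r (inv k \<otimes> g))"
      by (subst sum_carrier_lmult_reindex[OF h]) (intro sum.cong refl, simp)
  qed
  also have "\<dots> = (\<Sum>k\<in>carrier G. r (inv k \<otimes> g) * (\<Sum>h\<in>H. a (h \<otimes> k)))"
    by (subst sum.swap) (simp add: sum_distrib_left mult.commute)
  also have "\<dots> = 0"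
    using a by (simp add: ga_coset_kernel_def)
  finally show "(\<Sum>h\<in>H. ga_mult G a r (h \<otimes> g)) = 0" .
qed

lemma ga_ideal_coset_kernel:
  assumes H: "H \<lhd> G"
  shows "ga_ideal G (ga_coset_kernel G H :: ('a \<Rightarrow> 'f::field) set)"
  unfolding ga_ideal_def
proof (intro conjI ballI)
  show "ga_coset_kernel G H \<subseteq> group_alg G"
    by (auto simp: ga_coset_kernel_def)
  show "(ga_zero :: 'a \<Rightarrow> 'f) \<in> ga_coset_kernel G H"
    by (simp add: ga_coset_kernel_def ga_zero_closed) (simp add: ga_zero_def)
  fix a :: "'a \<Rightarrow> 'f" assume a: "a \<in> ga_coset_kernel G H"
  then show "ga_neg a \<in> ga_coset_kernel G H"
    by (simp add: ga_coset_kernel_def ga_neg_closed) (simp add: ga_neg_def sum_negf)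
  fix b :: "'a \<Rightarrow> 'f" assume "b \<in> ga_coset_kernel G H"
  with a show "ga_add a b \<in> ga_coset_kernel G H"
    by (simp add: ga_coset_kernel_def ga_add_closed) (simp add: ga_add_def sum.distrib)
next
  fix r a :: "'a \<Rightarrow> 'f" assume "a \<in> ga_coset_kernel G H"
  then show "ga_mult G r a \<in> ga_coset_kernel G H" and "ga_mult G a r \<in> ga_coset_kernel G H"
    using ga_mult_left_mem_coset_kernel[OF H] ga_mult_right_mem_coset_kernel[OF normal_imp_subgroup[OF H]]
    by blast+
qed

lemma sum_subgroup_basis_apply:
  assumes H: "subgroup H G" and c: "c \<in> carrier G" and g: "g \<in> carrier G"
  shows "(\<Sum>h\<in>H. (ga_basis G c :: 'a \<Rightarrow> 'f::field) (h \<otimes> g)) = (if c \<otimes> inv g \<in> H then 1 else 0)"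
proof -
  have "finite H"
    using finite_subset[OF subgroup.subset[OF H] finite_carrier] .
  moreover have "h \<otimes> g = c \<longleftrightarrow> h = c \<otimes> inv g" if "h \<in> H" for h
    using inv_solve_right[of h c g] subgroup.subset[OF H] that c g by auto
  ultimately show ?thesis
    by (simp add: ga_basis_def cong: sum.cong)
qed

lemma basis_diff_mem_coset_kernel:
  assumes H: "subgroup H G" and h: "h \<in> H"
  shows "ga_add (ga_basis G h) (ga_neg (ga_basis G \<one>)) \<in> (ga_coset_kernel G H :: ('a \<Rightarrow> 'f::field) set)"
proof -
  have hG: "h \<in> carrier G"
    using H h subgroup.subset by blast
  have "(\<Sum>k\<in>H. (ga_add (ga_basis G h) (ga_neg (ga_basis G \<one>)) :: 'a \<Rightarrow> 'f) (k \<otimes> g)) = 0"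
    if g: "g \<in> carrier G" for g
  proof -
    have "h \<otimes> inv g \<in> H \<longleftrightarrow> \<one> \<otimes> inv g \<in> H"
    proof
      assume "h \<otimes> inv g \<in> H"
      then have "inv h \<otimes> (h \<otimes> inv g) \<in> H"
        using H h by (simp add: subgroup.m_closed subgroup.m_inv_closed)
      then show "\<one> \<otimes> inv g \<in> H"
        using hG g by (simp flip: m_assoc)
    next
      assume "\<one> \<otimes> inv g \<in> H"
      then show "h \<otimes> inv g \<in> H"
        using H h g by (simp add: subgroup.m_closed)
    qed
    moreover have "(\<Sum>k\<in>H. (ga_add (ga_basis G h) (ga_neg (ga_basis G \<one>)) :: 'a \<Rightarrow> 'f) (k \<otimes> g))
        = (\<Sum>k\<in>H. (ga_basis G h :: 'a \<Rightarrow> 'f) (k \<otimes> g)) - (\<Sum>k\<in>H. (ga_basis G \<one> :: 'a \<Rightarrow> 'f) (k \<otimes> g))"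
      by (simp add: ga_add_def ga_neg_def sum_subtractf)
    ultimately show ?thesis
      by (simp only: sum_subgroup_basis_apply[OF H hG g] sum_subgroup_basis_apply[OF H one_closed g])
        simp
  qed
  then show ?thesis
    using hG by (simp add: ga_coset_kernel_def ga_add_closed ga_neg_closed ga_basis_closed)
qed

lemma Delta_subset_coset_kernel:
  assumes H: "H \<lhd> G"
  shows "(Delta G H :: ('a \<Rightarrow> 'f::field) set) \<subseteq> ga_coset_kernel G H"
  unfolding Delta_def
  using basis_diff_mem_coset_kernel[OF normal_imp_subgroup[OF H]]
  by (intro ga_ideal_gen_least[OF ga_ideal_coset_kernel[OF H]]) blast

lemma basis_diff_mem_Delta:
  "h \<in> H \<Longrightarrow> ga_add (ga_basis G h) (ga_neg (ga_basis G \<one>)) \<in> (Delta G H :: ('a \<Rightarrow> 'f::field) set)"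
  unfolding Delta_def by (rule subsetD[OF ga_ideal_gen_subset]) blast

lemma ga_ideal_Delta:
  assumes "H \<subseteq> carrier G"
  shows "ga_ideal G (Delta G H :: ('a \<Rightarrow> 'f::field) set)"
  unfolding Delta_def
  using assms by (intro ga_ideal_ideal_gen) (blast intro: ga_add_closed ga_neg_closed ga_basis_closed)

end

lemma (in group) subgroup_pow_prime_eq_one:
  assumes H: "subgroup H G" and p: "Factorial_Ring.prime p" and not_dvd: "\<not> p dvd card H"
    and h: "h \<in> H" and hp: "h [^] p = \<one>"
  shows "h = \<one>"
proof -
  have hG: "h \<in> carrier G"
    using h subgroup.subset[OF H] by blast
  have "subgroup (generate G {h}) (G\<lparr>carrier := H\<rparr>)"
    using H h hG by (intro subgroup_incl generate_is_subgroup generate_subgroup_incl) auto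
  then have "card (generate G {h}) dvd order (G\<lparr>carrier := H\<rparr>)"
    using group.lagrange[OF subgroup.subgroup_is_group[OF H is_group]] by (metis dvd_triv_right)
  then have "ord h dvd card H"
    by (simp add: generate_pow_card[OF hG] order_def)
  moreover have "ord h dvd p"
    using hp pow_eq_id[OF hG] by simp
  ultimately have "ord h = 1"
    using p not_dvd by (metis prime_nat_iff)
  then show ?thesis
    using ord_eq_1[OF hG] by simp
qed

lemma char3_three_eq_zero: "CHAR('f::field) = 3 \<Longrightarrow> (3::'f) = 0"
  by (metis of_nat_CHAR of_nat_numeral)

lemma power3_add_char3:
  fixes a b :: "'f::field"
  assumes "CHAR('f) = 3"
  shows "(a + b) ^ 3 = a ^ 3 + b ^ 3"
proof -
  have "(a + b) ^ 3 = a ^ 3 + b ^ 3 + 3 * (a^2 * b + a * b^2)"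
    by (simp add: power3_eq_cube power2_eq_square algebra_simps)
  then show ?thesis
    using char3_three_eq_zero[OF assms] by simp
qed

lemma power3_sum_char3:
  fixes f :: "'a \<Rightarrow> 'f::field"
  assumes "CHAR('f) = 3"
  shows "(\<Sum>x\<in>A. f x) ^ 3 = (\<Sum>x\<in>A. f x ^ 3)"
  by (induction A rule: infinite_finite_induct) (simp_all add: power3_add_char3[OF assms])

lemma sum_3_cycle_char3:
  fixes f :: "'a \<Rightarrow> 'f::field"
  assumes char: "CHAR('f) = 3" and x: "\<rho> x \<noteq> x" and x3: "\<rho> (\<rho> (\<rho> x)) = x"
    and f: "f (\<rho> x) = f x" "f (\<rho> (\<rho> x)) = f (\<rho> x)"
  shows "sum f {x, \<rho> x, \<rho> (\<rho> x)} = 0"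
proof -
  have "\<rho> (\<rho> x) \<noteq> x" "\<rho> (\<rho> x) \<noteq> \<rho> x"
    using arg_cong[of _ _ \<rho>] x x3 by force+
  then have "sum f {x, \<rho> x, \<rho> (\<rho> x)} = 3 * f x"
    using x f by simp
  then show ?thesis
    using char3_three_eq_zero[OF char] by simp
qed

lemma sum_eq_sum_fixed_points_char3:
  fixes f :: "'a \<Rightarrow> 'f::field"
  assumes char: "CHAR('f) = 3" and "finite A"
    and "\<forall>x\<in>A. \<rho> x \<in> A" and "\<forall>x\<in>A. \<rho> (\<rho> (\<rho> x)) = x" and "\<forall>x\<in>A. f (\<rho> x) = f x"
  shows "sum f A = sum f {x\<in>A. \<rho> x = x}"
  using assms(2-)
proof (induction A rule: finite_psubset_induct)
  case (psubset A)
  show ?case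
  proof (cases "\<forall>x\<in>A. \<rho> x = x")
    case True
    then have "{x\<in>A. \<rho> x = x} = A" by auto
    then show ?thesis by simp
  next
    case False
    then obtain x where x: "x \<in> A" "\<rho> x \<noteq> x" by auto
    have x3: "\<rho> (\<rho> (\<rho> x)) = x"
      using psubset.prems x by auto
    define orbit where "orbit = {x, \<rho> x, \<rho> (\<rho> x)}"
    have "sum f orbit = 0"
      unfolding orbit_def using psubset.prems x x3 by (intro sum_3_cycle_char3[OF char]) auto
    have orbit_closed: "\<rho> y \<in> orbit \<longleftrightarrow> y \<in> orbit" if "y \<in> A" for y
    proof -
      have "\<rho> (\<rho> (\<rho> y)) = y"
        using that psubset.prems by auto
      moreover have "\<rho> y \<in> orbit \<Longrightarrow> \<rho> (\<rho> (\<rho> y)) \<in> {\<rho> (\<rho> x), x, \<rho> x}"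
        using x3 by (auto simp: orbit_def)
      ultimately show ?thesis
        using x3 by (auto simp: orbit_def)
    qed
    have "A - orbit \<subset> A"
      using x by (auto simp: orbit_def)
    moreover have "\<forall>y\<in>A - orbit. \<rho> y \<in> A - orbit"
      using orbit_closed psubset.prems by auto
    ultimately have "sum f (A - orbit) = sum f {y\<in>A - orbit. \<rho> y = y}"
      using psubset.IH psubset.prems by auto
    moreover have "orbit \<subseteq> A"
      using psubset.prems x by (auto simp: orbit_def)
    then have "sum f A = sum f orbit + sum f (A - orbit)"
      using psubset.hyps by (simp add: sum.subset_diff)
    moreover have "{y\<in>A - orbit. \<rho> y = y} = {y\<in>A. \<rho> y = y}"
      using x x3 by (auto simp: orbit_def)
    ultimately show ?thesis
      using \<open>sum f orbit = 0\<close> by simp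
  qed
qed

locale order3_outside = finite_group G for G (structure) +
  fixes H :: "'a set"
  assumes normal: "H \<lhd> G"
    and card_not_3_dvd: "\<not> 3 dvd card H"
    and cube_outside: "\<And>g. g \<in> carrier G \<Longrightarrow> g \<notin> H \<Longrightarrow> g \<otimes> g \<otimes> g = \<one>"
begin

lemma subgroup_H: "subgroup H G"
  using normal by (rule normal_imp_subgroup)

lemma H_subset: "H \<subseteq> carrier G"
  using subgroup_H by (rule subgroup.subset)

lemma finite_H: "finite H"
  using finite_subset[OF H_subset finite_carrier] .

lemma rotate_mem_nontrivial:
  assumes a: "a \<in> carrier G" and b: "b \<in> carrier G" and c: "c \<in> carrier G"
    and abc: "a \<otimes> b \<otimes> c \<in> H - {\<one>}"
  shows "b \<otimes> c \<otimes> a \<in> H - {\<one>}"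
proof -
  have conj: "b \<otimes> c \<otimes> a = inv a \<otimes> (a \<otimes> b \<otimes> c) \<otimes> a"
    using a b c by (simp add: m_assoc flip: m_assoc[of "inv a" a])
  have "b \<otimes> c \<otimes> a \<in> H"
    unfolding conj using normal.inv_op_closed1[OF normal a] abc by auto
  moreover have "b \<otimes> c \<otimes> a \<noteq> \<one>"
  proof
    assume "b \<otimes> c \<otimes> a = \<one>"
    then have "a \<otimes> (b \<otimes> c \<otimes> a) \<otimes> inv a = \<one>"
      using a by simp
    moreover have "a \<otimes> (b \<otimes> c \<otimes> a) \<otimes> inv a = a \<otimes> b \<otimes> c"
      using a b c by (simp add: m_assoc)
    ultimately show False
      using abc by simp
  qed
  ultimately show ?thesis by simp
qed

lemma rotate_mem_nontrivial_iff:
  assumes "a \<in> carrier G" and "b \<in> carrier G" and "c \<in> carrier G"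
  shows "b \<otimes> c \<otimes> a \<in> H - {\<one>} \<longleftrightarrow> a \<otimes> b \<otimes> c \<in> H - {\<one>}"
  using rotate_mem_nontrivial assms by blast

lemma cube_mem_nontrivial_iff:
  assumes g: "g \<in> carrier G"
  shows "g \<otimes> g \<otimes> g \<in> H - {\<one>} \<longleftrightarrow> g \<in> H - {\<one>}"
proof (cases "g \<in> H")
  case True
  have "g [^] (3::nat) = g \<otimes> g \<otimes> g"
    using g by (simp add: numeral_3_eq_3 m_assoc)
  moreover have "Factorial_Ring.prime (3::nat)"
    by simp
  ultimately have "g \<otimes> g \<otimes> g = \<one> \<Longrightarrow> g = \<one>"
    using subgroup_pow_prime_eq_one[OF subgroup_H _ card_not_3_dvd True] by simp
  moreover have "g \<otimes> g \<otimes> g \<in> H"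
    using True subgroup_H by (simp add: subgroup.m_closed)
  ultimately show ?thesis
    using True by auto
next
  case False
  then show ?thesis
    using cube_outside[OF g] by simp
qed

lemma sum_nontrivial_cube:
  assumes char: "CHAR('f::field) = 3"
  shows "(\<Sum>k\<in>H - {\<one>}. ga_mult G (ga_mult G u u) u k) = (\<Sum>k\<in>H - {\<one>}. (u k :: 'f)) ^ 3"
proof -
  let ?C = "carrier G"
  define \<phi> where "\<phi> = (\<lambda>(a, b, c). if a \<otimes> b \<otimes> c \<in> H - {\<one>} then u a * u b * u c else (0::'f))"
  define \<rho> :: "'a \<times> 'a \<times> 'a \<Rightarrow> 'a \<times> 'a \<times> 'a" where "\<rho> = (\<lambda>(a, b, c). (b, c, a))"
  have \<phi>_\<rho>: "\<phi> (\<rho> x) = \<phi> x" if "x \<in> ?C \<times> ?C \<times> ?C" for x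
    using that rotate_mem_nontrivial_iff by (auto simp: \<phi>_def \<rho>_def ac_simps)
  have "(\<Sum>k\<in>H - {\<one>}. ga_mult G (ga_mult G u u) u k)
      = (\<Sum>a\<in>?C. \<Sum>b\<in>?C. \<Sum>c\<in>?C. if a \<otimes> b \<otimes> c \<in> H - {\<one>} then u a * u b * u c else 0)"
    by (rule sum_ga_cube_eq_sum_triples) (use H_subset in auto)
  also have "\<dots> = (\<Sum>x\<in>?C \<times> ?C \<times> ?C. \<phi> x)"
    by (simp add: sum.cartesian_product \<phi>_def del: Diff_iff insert_iff)
  also have "\<dots> = (\<Sum>x\<in>{x\<in>?C \<times> ?C \<times> ?C. \<rho> x = x}. \<phi> x)"
    using char finite_carrier \<phi>_\<rho> by (intro sum_eq_sum_fixed_points_char3) (auto simp: \<rho>_def)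
  also have "{x\<in>?C \<times> ?C \<times> ?C. \<rho> x = x} = (\<lambda>g. (g, g, g)) ` ?C"
    by (auto simp: \<rho>_def)
  also have "(\<Sum>x\<in>(\<lambda>g. (g, g, g)) ` ?C. \<phi> x) = (\<Sum>g\<in>?C. if g \<in> H - {\<one>} then u g ^ 3 else 0)"
    by (simp add: sum.reindex inj_on_def \<phi>_def cube_mem_nontrivial_iff del: Diff_iff insert_iff)
      (rule sum.cong[OF refl], simp add: power3_eq_cube)
  also have "\<dots> = (\<Sum>g\<in>?C \<inter> (H - {\<one>}). u g ^ 3)"
    using finite_carrier by (rule sum.inter_restrict[symmetric])
  also have "\<dots> = (\<Sum>g\<in>H - {\<one>}. u g ^ 3)"
    using H_subset by (intro sum.cong) auto
  also have "\<dots> = (\<Sum>g\<in>H - {\<one>}. u g) ^ 3"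
    by (rule power3_sum_char3[OF char, symmetric])
  finally show ?thesis .
qed

lemma sum_nontrivial_pow3:
  assumes char: "CHAR('f::field) = 3" and v: "v \<in> group_alg G"
  shows "(\<Sum>k\<in>H - {\<one>}. (v [^]\<^bsub>ga_monoid G\<^esub> ((3::nat) ^ j)) k) = (\<Sum>k\<in>H - {\<one>}. (v k :: 'f)) ^ 3 ^ j"
proof -
  interpret M: monoid "ga_monoid G :: ('a \<Rightarrow> 'f) monoid"
    by (rule monoid_ga_monoid)
  show ?thesis
  proof (induction j)
    case 0
    show ?case using v by (simp add: ga_mult_one_left)
  next
    case (Suc j)
    let ?w = "v [^]\<^bsub>ga_monoid G\<^esub> ((3::nat) ^ j)"
    have w: "?w \<in> group_alg G"
      using M.nat_pow_closed v by simp
    have "v [^]\<^bsub>ga_monoid G\<^esub> ((3::nat) ^ Suc j) = ?w [^]\<^bsub>ga_monoid G\<^esub> (3::nat)"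
      using M.nat_pow_pow v by (simp add: mult.commute)
    also have "\<dots> = ga_mult G (ga_mult G ?w ?w) ?w"
      using ga_monoid_pow3[OF w] .
    finally have "(\<Sum>k\<in>H - {\<one>}. (v [^]\<^bsub>ga_monoid G\<^esub> ((3::nat) ^ Suc j)) k) = (\<Sum>k\<in>H - {\<one>}. ?w k) ^ 3"
      using sum_nontrivial_cube[OF char] by simp
    also have "\<dots> = (\<Sum>k\<in>H - {\<one>}. v k) ^ 3 ^ Suc j"
      using Suc by (simp add: power_mult[symmetric] mult.commute)
    finally show ?case .
  qed
qed

lemma ga_ideal_Delta_H: "ga_ideal G (Delta G H :: ('a \<Rightarrow> 'f::field) set)"
  using H_subset by (rule ga_ideal_Delta)

lemma jacobson_rad_Delta_subset: "ga_jacobson_rad G (Delta G H) \<subseteq> (group_alg G :: ('a \<Rightarrow> 'f::field) set)"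
  using ga_ideal_Delta_H by (auto simp: ga_jacobson_rad_def ga_ideal_def)

lemma jacobson_rad_Delta_mult_apply_one:
  fixes a r :: "'a \<Rightarrow> 'f::field"
  assumes char: "CHAR('f) = 3" and finite_field: "finite (UNIV :: 'f set)"
    and a: "a \<in> ga_jacobson_rad G (Delta G H)" and r: "r \<in> Delta G H"
  shows "ga_mult G r a \<one> = 0"
proof -
  interpret M: monoid "ga_monoid G :: ('a \<Rightarrow> 'f) monoid"
    by (rule monoid_ga_monoid)
  define z where "z = ga_mult G r a"
  have z: "z \<in> group_alg G"
    by (simp add: z_def ga_mult_closed)
  obtain n :: nat where "z [^]\<^bsub>ga_monoid G\<^esub> n = ga_zero"
    using jacobson_rad_mult_nilpotent[OF finite_field ga_ideal_Delta_H a r] unfolding z_def by blast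
  moreover have "n \<le> 3 ^ n"
    by (rule self_le_ge2_pow) simp
  ultimately have "z [^]\<^bsub>ga_monoid G\<^esub> ((3::nat) ^ n) = ga_zero"
    using M.nat_pow_mult[of z n "3 ^ n - n"] z by (simp add: ga_mult_zero_left)
  then have "(\<Sum>k\<in>H - {\<one>}. z k) ^ 3 ^ n = 0"
    using sum_nontrivial_pow3[OF char z, of n] by (simp add: ga_zero_def)
  then have nontrivial: "(\<Sum>k\<in>H - {\<one>}. z k) = 0"
    by simp
  have "z \<in> ga_coset_kernel G H"
    unfolding z_def
    using Delta_subset_coset_kernel[OF normal] r ga_mult_right_mem_coset_kernel[OF subgroup_H] by blast
  then have "(\<Sum>h\<in>H. z (h \<otimes> \<one>)) = 0"
    by (simp add: ga_coset_kernel_def)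
  moreover have "(\<Sum>h\<in>H. z (h \<otimes> \<one>)) = z \<one> + (\<Sum>k\<in>H - {\<one>}. z k)"
    using H_subset finite_H subgroup.one_closed[OF subgroup_H]
    by (simp add: sum.remove subset_iff cong: sum.cong)
  ultimately show ?thesis
    using nontrivial by (simp add: z_def)
qed

lemma jacobson_rad_Delta_apply_left_invariant:
  fixes a :: "'a \<Rightarrow> 'f::field"
  assumes char: "CHAR('f) = 3" and finite_field: "finite (UNIV :: 'f set)"
    and a: "a \<in> ga_jacobson_rad G (Delta G H)" and g: "g \<in> carrier G" and h: "h \<in> H"
  shows "a (inv h \<otimes> g) = a g"
proof -
  have aG: "a \<in> group_alg G"
    using a jacobson_rad_Delta_subset by blast
  have hG: "h \<in> carrier G"
    using h H_subset by blast
  define e where "e = (ga_add (ga_basis G h) (ga_neg (ga_basis G \<one>)) :: 'a \<Rightarrow> 'f)"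
  have e: "e \<in> Delta G H"
    unfolding e_def using h by (rule basis_diff_mem_Delta)
  then have eG: "e \<in> group_alg G"
    using ga_ideal_Delta_H by (auto simp: ga_ideal_def)
  have bG: "(ga_basis G (inv g) :: 'a \<Rightarrow> 'f) \<in> group_alg G"
    using g by (simp add: ga_basis_closed)
  have "ga_mult G (ga_basis G (inv g)) e \<in> Delta G H"
    using ga_ideal_Delta_H bG e unfolding ga_ideal_def by blast
  then have "0 = ga_mult G (ga_mult G (ga_basis G (inv g)) e) a \<one>"
    using jacobson_rad_Delta_mult_apply_one[OF char finite_field a] by simp
  also have "\<dots> = ga_mult G (ga_basis G (inv g)) (ga_mult G e a) \<one>"
    by (simp add: ga_mult_assoc[OF bG eG aG])
  also have "\<dots> = ga_mult G e a g"
    using g by (simp add: ga_basis_mult_apply)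
  also have "\<dots> = ga_mult G (ga_basis G h) a g - ga_mult G (ga_basis G \<one>) a g"
    by (simp add: e_def ga_mult_add_left ga_mult_neg_left) (simp add: ga_add_def ga_neg_def)
  also have "\<dots> = a (inv h \<otimes> g) - a g"
    using g hG by (simp add: ga_basis_mult_apply)
  finally show ?thesis
    by simp
qed

lemma jacobson_rad_Delta_eq_zero:
  fixes a :: "'a \<Rightarrow> 'f::field"
  assumes char: "CHAR('f) = 3" and finite_field: "finite (UNIV :: 'f set)"
    and a: "a \<in> ga_jacobson_rad G (Delta G H)"
  shows "a = ga_zero"
proof
  fix g
  have aG: "a \<in> group_alg G"
    using a jacobson_rad_Delta_subset by blast
  show "a g = ga_zero g"
  proof (cases "g \<in> carrier G")
    case False
    then show ?thesis
      using aG by (simp add: group_alg_def ga_zero_def)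
  next
    case g: True
    have "a \<in> ga_coset_kernel G H"
      using a Delta_subset_coset_kernel[OF normal] by (auto simp: ga_jacobson_rad_def)
    then have "0 = (\<Sum>h\<in>H. a (h \<otimes> g))"
      using g by (simp add: ga_coset_kernel_def)
    also have "\<dots> = (\<Sum>h\<in>H. a (inv h \<otimes> g))"
      using subgroup_H H_subset
      by (intro sum.reindex_bij_witness[where i = "\<lambda>x. inv x" and j = "\<lambda>x. inv x"]) (auto simp: subgroup.m_inv_closed)
    also have "\<dots> = (\<Sum>h\<in>H. a g)"
      using jacobson_rad_Delta_apply_left_invariant[OF char finite_field a g] by simp
    also have "\<dots> = of_nat (card H) * a g"
      by simp
    finally have "of_nat (card H) * a g = 0" ..
    moreover have "(of_nat (card H) :: 'f) \<noteq> 0"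
      using card_not_3_dvd char by (simp add: of_nat_eq_0_iff_char_dvd)
    ultimately show ?thesis
      by (simp add: ga_zero_def)
  qed
qed

theorem semisimple_Delta:
  assumes "CHAR('f::field) = 3" and "finite (UNIV :: 'f set)"
  shows "ga_semisimple_ring G (Delta G H :: ('a \<Rightarrow> 'f) set)"
  unfolding ga_semisimple_ring_def
  using jacobson_rad_Delta_eq_zero[OF assms] ga_zero_mem_jacobson_rad ga_ideal_Delta_H
  by (auto simp: ga_ideal_def)

end

lemma dvd_square_add_self_add_one:
  fixes m t :: int
  assumes "t ^ 3 mod m = 1 mod m" and "gcd m (t - 1) = 1"
  shows "m dvd t\<^sup>2 + t + 1"
proof -
  have "m dvd (t - 1) * (t\<^sup>2 + t + 1)"
    using assms(1) by (simp add: mod_eq_dvd_iff algebra_simps power2_eq_square power3_eq_cube)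
  then show ?thesis
    using assms(2) by (simp add: coprime_iff_gcd_eq_1 coprime_dvd_mult_right_iff)
qed

locale T_group = finite_group G for G (structure) +
  fixes x y :: 'a and m :: nat and t :: int
  assumes x_closed: "x \<in> carrier G" and y_closed: "y \<in> carrier G"
    and generated: "generate G {x, y} = carrier G"
    and x_pow_m: "x [^] m = \<one>" and y_cube: "y [^] (3::nat) = \<one>"
    and y_conj_x: "inv y \<otimes> x \<otimes> y = x [^] t"
    and m_dvd: "int m dvd t\<^sup>2 + t + 1"
    and not_3_dvd_m: "\<not> 3 dvd m"
begin

lemma y_conj_x_pow: "inv y \<otimes> x [^] (i::int) \<otimes> y = x [^] (t * i)"
proof -
  have "(\<lambda>z. inv y \<otimes> z \<otimes> y) \<in> hom G G"
    using y_closed by (intro homI) (simp_all add: m_assoc flip: m_assoc[of y "inv y"])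
  then have "inv y \<otimes> x [^] i \<otimes> y = (inv y \<otimes> x \<otimes> y) [^] i"
    using hom_int_pow[OF _ x_closed is_group is_group] by blast
  also have "\<dots> = x [^] (t * i)"
    using x_closed by (simp add: y_conj_x int_pow_pow)
  finally show ?thesis .
qed

lemma x_pow_mult_y_pow: "x [^] (i::int) \<otimes> y [^] (l::nat) = y [^] l \<otimes> x [^] (t ^ l * i)"
proof (induction l arbitrary: i)
  case 0
  then show ?case using x_closed by simp
next
  case (Suc l)
  have x_pow_mult_y: "x [^] (j::int) \<otimes> y = y \<otimes> x [^] (t * j)" for j
  proof -
    have "x [^] j \<otimes> y = y \<otimes> (inv y \<otimes> x [^] j \<otimes> y)"
      using x_closed y_closed by (simp add: m_assoc flip: m_assoc[of y "inv y"])
    then show ?thesis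
      by (simp only: y_conj_x_pow)
  qed
  have "x [^] i \<otimes> y [^] Suc l = (x [^] i \<otimes> y [^] l) \<otimes> y"
    using x_closed y_closed by (simp add: m_assoc)
  also have "\<dots> = y [^] l \<otimes> (y \<otimes> x [^] (t * (t ^ l * i)))"
    using Suc x_closed y_closed by (simp add: m_assoc x_pow_mult_y)
  also have "\<dots> = y [^] Suc l \<otimes> x [^] (t ^ Suc l * i)"
    using x_closed y_closed by (simp add: m_assoc mult.assoc)
  finally show ?case .
qed

lemma inv_y: "inv y = y [^] (2::nat)"
  using y_cube y_closed by (intro inv_equality) (simp_all add: numeral_3_eq_3 numeral_2_eq_2 m_assoc)

lemma normal_form:
  assumes "g \<in> carrier G"
  obtains j :: nat and i :: int where "g = y [^] j \<otimes> x [^] i"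
proof -
  have "g \<in> generate G {x, y}"
    using assms generated by simp
  then have "\<exists>(j::nat) (i::int). g = y [^] j \<otimes> x [^] i"
  proof (induction rule: generate.induct)
    case one
    show ?case by (rule exI[of _ 0], rule exI[of _ 0]) simp
  next
    case (incl h)
    then consider "h = x" | "h = y" by blast
    then show ?case
    proof cases
      case 1
      then show ?thesis using x_closed by (intro exI[of _ 0] exI[of _ 1]) simp
    next
      case 2
      then show ?thesis using y_closed by (intro exI[of _ 1] exI[of _ 0]) simp
    qed
  next
    case (inv h)
    then consider "h = x" | "h = y" by blast
    then show ?case
    proof cases
      case 1
      then show ?thesis using x_closed by (intro exI[of _ 0] exI[of _ "-1"]) (simp add: int_pow_neg)
    next
      case 2
      then show ?thesis using y_closed inv_y by (intro exI[of _ 2] exI[of _ 0]) simp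
    qed
  next
    case (eng h1 h2)
    then obtain j i l k where h1: "h1 = y [^] (j::nat) \<otimes> x [^] (i::int)"
      and h2: "h2 = y [^] (l::nat) \<otimes> x [^] (k::int)" by blast
    have "h1 \<otimes> h2 = y [^] j \<otimes> (x [^] i \<otimes> y [^] l) \<otimes> x [^] k"
      using x_closed y_closed by (simp add: h1 h2 m_assoc)
    also have "\<dots> = y [^] (j + l) \<otimes> x [^] (t ^ l * i + k)"
      using x_closed y_closed by (simp add: x_pow_mult_y_pow m_assoc nat_pow_mult int_pow_mult flip: m_assoc[of "y [^] j"])
    finally show ?case by blast
  qed
  then show ?thesis
    using that by blast
qed

lemma generate_x: "generate G {x} = {x [^] (i::int) | i. True}"
  using generate_pow[OF x_closed] by simp

lemma normal_generate_x: "generate G {x} \<lhd> G"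
proof (rule normal_invI)
  show "subgroup (generate G {x}) G"
    using x_closed by (intro generate_is_subgroup) simp
  fix g h assume g: "g \<in> carrier G" and "h \<in> generate G {x}"
  then obtain i where h: "h = x [^] (i::int)"
    by (auto simp: generate_x)
  obtain j k where g_inv: "inv g = y [^] (j::nat) \<otimes> x [^] (k::int)"
    using normal_form[OF inv_closed[OF g]] .
  have "g = inv (x [^] k) \<otimes> inv (y [^] j)"
    using g_inv g x_closed y_closed by (metis inv_inv inv_mult_group int_pow_closed nat_pow_closed)
  then have "g \<otimes> h \<otimes> inv g = inv (x [^] k) \<otimes> (inv (y [^] j) \<otimes> x [^] i \<otimes> y [^] j) \<otimes> x [^] k"
    using g_inv x_closed y_closed by (simp add: h m_assoc)
  also have "\<dots> = inv (x [^] k) \<otimes> x [^] (t ^ j * i) \<otimes> x [^] k"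
    using x_closed y_closed by (simp add: x_pow_mult_y_pow m_assoc flip: m_assoc[of "inv (y [^] j)" "y [^] j"])
  also have "\<dots> \<in> generate G {x}"
    by (auto simp: generate_x int_pow_neg int_pow_mult x_closed) (metis int_pow_mult x_closed int_pow_neg)
  finally show "g \<otimes> h \<otimes> inv g \<in> generate G {x}" .
qed

lemma x_pow_multiple_eq_one:
  assumes "int m dvd c"
  shows "x [^] (c * i) = \<one>"
proof -
  obtain d where "c = int m * d"
    using assms by (auto elim: dvdE)
  then have "x [^] (c * i) = (x [^] (int m)) [^] (d * i)"
    using x_closed by (simp add: int_pow_pow mult.assoc)
  also have "\<dots> = \<one>"
    using x_pow_m by (simp add: int_pow_int)
  finally show ?thesis .
qed

lemma cube_normal_form:
  "(y [^] (r::nat) \<otimes> x [^] (i::int)) \<otimes> (y [^] r \<otimes> x [^] i) \<otimes> (y [^] r \<otimes> x [^] i)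
     = y [^] (3 * r) \<otimes> x [^] ((t ^ r * t ^ r + t ^ r + 1) * i)"
proof -
  have y_pow_assoc: "y [^] (a::nat) \<otimes> (y [^] (b::nat) \<otimes> w) = y [^] (a + b) \<otimes> w"
    if "w \<in> carrier G" for a b w
    using that y_closed by (simp add: nat_pow_mult flip: m_assoc)
  have "(y [^] r \<otimes> x [^] i) \<otimes> (y [^] r \<otimes> x [^] i) = y [^] r \<otimes> (x [^] i \<otimes> y [^] r) \<otimes> x [^] i"
    using x_closed y_closed by (simp add: m_assoc)
  also have "\<dots> = y [^] (r + r) \<otimes> x [^] (t ^ r * i + i)"
    using x_closed y_closed
    by (simp only: x_pow_mult_y_pow) (simp add: m_assoc y_pow_assoc int_pow_mult[symmetric])
  finally have "(y [^] r \<otimes> x [^] i) \<otimes> (y [^] r \<otimes> x [^] i) \<otimes> (y [^] r \<otimes> x [^] i)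
      = y [^] (r + r) \<otimes> (x [^] (t ^ r * i + i) \<otimes> y [^] r) \<otimes> x [^] i"
    using x_closed y_closed by (simp add: m_assoc)
  also have "\<dots> = y [^] (r + r + r) \<otimes> x [^] (t ^ r * (t ^ r * i + i) + i)"
    using x_closed y_closed
    by (simp only: x_pow_mult_y_pow) (simp add: m_assoc y_pow_assoc int_pow_mult[symmetric])
  also have "t ^ r * (t ^ r * i + i) + i = (t ^ r * t ^ r + t ^ r + 1) * i"
    by (simp add: algebra_simps)
  also have "r + r + r = 3 * r"
    by simp
  finally show ?thesis .
qed

lemma cube_y_pow_x_pow_eq_one:
  assumes "r = 1 \<or> r = 2"
  shows "(y [^] (r::nat) \<otimes> x [^] (i::int)) \<otimes> (y [^] r \<otimes> x [^] i) \<otimes> (y [^] r \<otimes> x [^] i) = \<one>"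
proof -
  from assms have "int m dvd t ^ r * t ^ r + t ^ r + 1"
  proof
    assume "r = 1"
    then show ?thesis
      using m_dvd by (simp add: power2_eq_square)
  next
    assume "r = 2"
    moreover have "t ^ 2 * t ^ 2 + t ^ 2 + 1 = (t\<^sup>2 + t + 1) * (t\<^sup>2 - t + 1)"
      by (simp add: algebra_simps power2_eq_square)
    ultimately show ?thesis
      using m_dvd by simp
  qed
  moreover have "y [^] (3 * r) = (y [^] (3::nat)) [^] r"
    using y_closed by (simp add: nat_pow_pow)
  ultimately show ?thesis
    using x_closed y_cube by (simp add: cube_normal_form x_pow_multiple_eq_one)
qed

lemma cube_outside_generate_x:
  assumes g: "g \<in> carrier G" and not_in: "g \<notin> generate G {x}"
  shows "g \<otimes> g \<otimes> g = \<one>"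
proof -
  obtain j i where g_eq: "g = y [^] (j::nat) \<otimes> x [^] (i::int)"
    using normal_form[OF g] .
  define r where "r = j mod 3"
  have "y [^] j = (y [^] (3::nat)) [^] (j div 3) \<otimes> y [^] r"
    using y_closed by (simp add: r_def nat_pow_pow nat_pow_mult)
  then have g_eq_r: "g = y [^] r \<otimes> x [^] i"
    using y_cube y_closed by (simp add: g_eq)
  have "r \<noteq> 0"
  proof
    assume "r = 0"
    then have "g = x [^] i"
      using g_eq_r x_closed by simp
    then show False
      using not_in by (auto simp: generate_x)
  qed
  moreover have "r < 3"
    by (simp add: r_def)
  ultimately show ?thesis
    unfolding g_eq_r by (intro cube_y_pow_x_pow_eq_one) linarith
qed

lemma not_3_dvd_card_generate_x: "\<not> 3 dvd card (generate G {x})"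
proof
  assume "3 dvd card (generate G {x})"
  moreover have "card (generate G {x}) dvd m"
    using generate_pow_card[OF x_closed] pow_eq_id[OF x_closed] x_pow_m by simp
  ultimately show False
    using not_3_dvd_m dvd_trans by blast
qed

lemma order3_outside_generate_x: "order3_outside G (generate G {x})"
  using finite_group_axioms normal_generate_x not_3_dvd_card_generate_x cube_outside_generate_x
  by (intro order3_outside.intro order3_outside_axioms.intro)

end

theorem proposition3p10:
  fixes G :: "('g, 'b) monoid_scheme"
    and x y :: 'g
    and k :: nat and m :: nat and t :: int
  assumes F_finite: "finite (UNIV :: 'f::field set)"
    and F_char: "CHAR('f) = 3"
    and m_def: "m = 3 * k + 1"
    and t_cube: "t ^ 3 mod int m = 1 mod int m"
    and t_gcd: "gcd (int m) (t - 1) = 1"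
    and grp: "group G"
    and xG: "x \<in> carrier G" and yG: "y \<in> carrier G"
    and gen: "generate G {x, y} = carrier G"
    and x_ord: "x [^]\<^bsub>G\<^esub> m = \<one>\<^bsub>G\<^esub>"
    and y_ord: "y [^]\<^bsub>G\<^esub> (3::nat) = \<one>\<^bsub>G\<^esub>"
    and conj: "inv\<^bsub>G\<^esub> y \<otimes>\<^bsub>G\<^esub> x \<otimes>\<^bsub>G\<^esub> y = x [^]\<^bsub>G\<^esub> t"
    and G_order: "order G = 3 * m"
  shows "ga_semisimple_ring G (Delta G (generate G {x}) :: ('g \<Rightarrow> 'f) set)"
proof -
  have "finite (carrier G)"
    using G_order m_def unfolding order_def by (intro card_ge_0_finite) simp
  moreover have "int m dvd t\<^sup>2 + t + 1"
    using t_cube t_gcd by (rule dvd_square_add_self_add_one)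
  moreover have "\<not> 3 dvd m"
    using m_def by presburger
  ultimately interpret T_group G x y m t
    using grp xG yG gen x_ord y_ord conj
    by (intro T_group.intro T_group_axioms.intro finite_group.intro finite_group_axioms.intro)
  show ?thesis
    using order3_outside.semisimple_Delta[OF order3_outside_generate_x F_char F_finite] .
qed

end
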